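(* Fix a set $A$, a set $V(A)$ of "objects", a binary relation $\trianglelefteq$ on objects, and a binary relation $\sqsubset$ on objects (with reflexive closure $\sqsubseteq$) satisfying: (i) if $x \trianglelefteq y$ and $y \sqsubset z$ then $x \trianglelefteq z$; (ii) $\sqsubset$ is well-founded on $V(A)$, i.e., there is no sequence $f$ with $f(i)\in V(A)$ and $f(i+1)\sqsubset f(i)$ for all $i$; (iii) $\sqsubset$ is transitive; (iv) if $x \sqsubset y$ and $y \in V(A)$ then $x \in V(A)$. Let $f:\mathbb{N}\to$ objects and $n\in\mathbb{N}$ be such that $f(n+1)\in V(A)$, $f$ is minimal at $n$, and $f$ is bad w.r.t. $\trianglelefteq$. Then there exists a sequence $g$ such that: $g(i)=f(i)$ for all $i\le n$; $g(n+1)\sqsubseteq f(n+1)$; for every $i\ge n+1$ there is $j\ge n+1$ with $g(i)\sqsubseteq f(j)$; the spliced sequence $f\,[n+1]\,g$ is bad w.r.t. $\trianglelefteq$; and $f\,[n+1]\,g$ is minimal at $n+1$.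
   Context: Sequences are functions $\mathbb{N}\to$ objects. A sequence $h$ is good w.r.t. $\trianglelefteq$ if there are $i<j$ with $h(i)\trianglelefteq h(j)$, and bad otherwise. For sequences $f,g$ and $n\in\mathbb{N}$, the splice $f\,[n]\,g$ is the sequence $j\mapsto g(j)$ if $n\le j$ and $j\mapsto f(j)$ otherwise. A sequence $f$ is minimal at $n$ if for every sequence $g$ such that $g(i)=f(i)$ for all $i<n$, $g(n)\sqsubset f(n)$, and for every $i\ge n$ there exists $j\ge n$ with $g(i)\sqsubseteq f(j)$, the sequence $g$ is good w.r.t. $\trianglelefteq$. *)

theory Defs
  imports Main
begin

definition good :: "('a \<Rightarrow> 'a \<Rightarrow> bool) \<Rightarrow> (nat \<Rightarrow> 'a) \<Rightarrow> bool" where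
  "good P h \<longleftrightarrow> (\<exists>i j. i < j \<and> P (h i) (h j))"

definition bad :: "('a \<Rightarrow> 'a \<Rightarrow> bool) \<Rightarrow> (nat \<Rightarrow> 'a) \<Rightarrow> bool" where
  "bad P h \<longleftrightarrow> \<not> good P h"

definition splice :: "(nat \<Rightarrow> 'a) \<Rightarrow> nat \<Rightarrow> (nat \<Rightarrow> 'a) \<Rightarrow> (nat \<Rightarrow> 'a)" where
  "splice f n g = (\<lambda>j. if n \<le> j then g j else f j)"

definition refl_cl :: "('a \<Rightarrow> 'a \<Rightarrow> bool) \<Rightarrow> 'a \<Rightarrow> 'a \<Rightarrow> bool" where
  "refl_cl S x y \<longleftrightarrow> S x y \<or> x = y"

definition minimal_at ::
  "('a \<Rightarrow> 'a \<Rightarrow> bool) \<Rightarrow> ('a \<Rightarrow> 'a \<Rightarrow> bool) \<Rightarrow> (nat \<Rightarrow> 'a) \<Rightarrow> nat \<Rightarrow> bool" where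
  "minimal_at P S f n \<longleftrightarrow>
     (\<forall>g. (\<forall>i<n. g i = f i) \<and> S (g n) (f n) \<and>
          (\<forall>i\<ge>n. \<exists>j\<ge>n. refl_cl S (g i) (f j)) \<longrightarrow> good P g)"

end

theory Submission
  imports Defs
begin

text \<open>Among all bad sequences that agree with f before position m and are dominated by f from m on,
  choose one whose m-th entry is minimal for the well-founded relation S. A sequence that lowers
  that entry and is dominated by the chosen one belongs to the same class (domination is
  transitive), so it cannot be bad: the chosen sequence is minimal at m.\<close>

definition dominated :: "('a \<Rightarrow> 'a \<Rightarrow> bool) \<Rightarrow> nat \<Rightarrow> (nat \<Rightarrow> 'a) \<Rightarrow> (nat \<Rightarrow> 'a) \<Rightarrow> bool" where
  "dominated S m g f \<longleftrightarrow> (\<forall>i\<ge>m. \<exists>j\<ge>m. refl_cl S (g i) (f j))"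

lemma refl_cl_trans:
  assumes "transp S" and "refl_cl S x y" and "refl_cl S y z"
  shows "refl_cl S x z"
  using assms unfolding refl_cl_def by (metis transpD)

lemma dominated_refl: "dominated S m f f"
  by (auto simp: dominated_def refl_cl_def)

lemma dominated_trans:
  assumes "transp S" and hg: "dominated S m h g" and gf: "dominated S m g f"
  shows "dominated S m h f"
  unfolding dominated_def
proof (intro allI impI)
  fix i assume "m \<le> i"
  then obtain j where "m \<le> j" "refl_cl S (h i) (g j)"
    using hg unfolding dominated_def by blast
  moreover from \<open>m \<le> j\<close> obtain k where "m \<le> k" "refl_cl S (g j) (f k)"
    using gf unfolding dominated_def by blast
  ultimately show "\<exists>k\<ge>m. refl_cl S (h i) (f k)"
    using refl_cl_trans[OF \<open>transp S\<close>] by blast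
qed

lemma splice_eq_right:
  assumes "\<And>i. i < m \<Longrightarrow> g i = f i"
  shows "splice f m g = g"
  using assms by (auto simp: splice_def fun_eq_iff not_le)

lemma wf_of_no_descending_chain:
  assumes "\<not> (\<exists>h. \<forall>i. h i \<in> X \<and> S (h (Suc i)) (h i))"
  shows "wf {(x, y). S x y \<and> x \<in> X \<and> y \<in> X}"
  using assms unfolding wf_iff_no_infinite_down_chain by auto

lemma exists_bad_minimal_at:
  assumes wf: "wf {(x, y). S x y \<and> x \<in> X \<and> y \<in> X}" and "transp S"
    and down: "\<And>x y. S x y \<Longrightarrow> y \<in> X \<Longrightarrow> x \<in> X"
    and "f m \<in> X" and "bad P f"
  obtains g where "\<forall>i<m. g i = f i" and "refl_cl S (g m) (f m)" and "dominated S m g f"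
    and "bad P g" and "minimal_at P S g m"
proof -
  define C where "C = {g. (\<forall>i<m. g i = f i) \<and> refl_cl S (g m) (f m) \<and>
                          dominated S m g f \<and> bad P g}"
  have "f m \<in> (\<lambda>g. g m) ` C"
    using \<open>bad P f\<close> dominated_refl unfolding C_def refl_cl_def by blast
  then obtain z where "z \<in> (\<lambda>g. g m) ` C"
    and z_min: "\<And>y. (y, z) \<in> {(x, y). S x y \<and> x \<in> X \<and> y \<in> X} \<Longrightarrow> y \<notin> (\<lambda>g. g m) ` C"
    by (rule wfE_min[OF wf]) blast
  then obtain g where "g \<in> C" and gm: "g m = z" by blast
  then have g_agree: "\<forall>i<m. g i = f i" and g_le: "refl_cl S (g m) (f m)"
    and g_dom: "dominated S m g f" and "bad P g"
    unfolding C_def by auto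
  have "z \<in> X"
    using g_le gm \<open>f m \<in> X\<close> down[of "g m" "f m"] unfolding refl_cl_def by auto
  have "minimal_at P S g m"
    unfolding minimal_at_def
  proof (intro allI impI)
    fix h
    assume "(\<forall>i<m. h i = g i) \<and> S (h m) (g m) \<and> (\<forall>i\<ge>m. \<exists>j\<ge>m. refl_cl S (h i) (g j))"
    then have h_agree: "\<forall>i<m. h i = g i" and h_lt: "S (h m) (g m)" and "dominated S m h g"
      unfolding dominated_def by auto
    have "h m \<in> X" using down[OF h_lt] gm \<open>z \<in> X\<close> by simp
    then have "h m \<notin> (\<lambda>g. g m) ` C"
      using z_min[of "h m"] h_lt gm \<open>z \<in> X\<close> by simp
    then have "h \<notin> C" by blast
    moreover have "refl_cl S (h m) (f m)"
      using refl_cl_trans[OF \<open>transp S\<close> _ g_le] h_lt unfolding refl_cl_def by blast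
    moreover have "dominated S m h f"
      using dominated_trans[OF \<open>transp S\<close> \<open>dominated S m h g\<close> g_dom] .
    ultimately show "good P h"
      using h_agree g_agree unfolding C_def bad_def by auto
  qed
  with g_agree g_le g_dom \<open>bad P g\<close> show thesis by (rule that)
qed

theorem lemma4:
  fixes V :: "'b set \<Rightarrow> 'a set" and A :: "'b set"
    and P :: "'a \<Rightarrow> 'a \<Rightarrow> bool" and S :: "'a \<Rightarrow> 'a \<Rightarrow> bool"
    and f :: "nat \<Rightarrow> 'a" and n :: nat
  assumes compat: "\<And>x y z. P x y \<Longrightarrow> S y z \<Longrightarrow> P x z"
    and wf: "\<not> (\<exists>h. \<forall>i. h i \<in> V A \<and> S (h (Suc i)) (h i))"
    and trans: "\<And>x y z. S x y \<Longrightarrow> S y z \<Longrightarrow> S x z"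
    and down: "\<And>x y. S x y \<Longrightarrow> y \<in> V A \<Longrightarrow> x \<in> V A"
    and inV: "f (Suc n) \<in> V A"
    and min: "minimal_at P S f n"
    and bad: "bad P f"
  shows "\<exists>g. (\<forall>i\<le>n. g i = f i) \<and> refl_cl S (g (Suc n)) (f (Suc n)) \<and>
             (\<forall>i\<ge>Suc n. \<exists>j\<ge>Suc n. refl_cl S (g i) (f j)) \<and>
             bad P (splice f (Suc n) g) \<and>
             minimal_at P S (splice f (Suc n) g) (Suc n)"
proof -
  have "transp S" using trans by (rule transpI)
  obtain g where "\<forall>i<Suc n. g i = f i" "refl_cl S (g (Suc n)) (f (Suc n))"
    "dominated S (Suc n) g f" "bad P g" "minimal_at P S g (Suc n)"
    by (rule exists_bad_minimal_at[OF wf_of_no_descending_chain[OF wf] \<open>transp S\<close> down inV bad])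
  moreover from this(1) have "splice f (Suc n) g = g"
    by (intro splice_eq_right) blast
  ultimately show ?thesis
    unfolding dominated_def by (auto simp: less_Suc_eq_le)
qed

end
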